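(* Let $B$ be a subring of $D$ and let $f\in R=D[t;\sigma,\delta]$ be monic of degree $m\ge2$ and right $B$-weak invariant. Then $B\oplus Bt\oplus\dots\oplus Bt^{m-1}\subseteq\mathrm{Nuc}_r(S_f)$.
   Context: $D$ is an associative division ring, $\sigma$ a ring endomorphism of $D$, $\delta$ a left $\sigma$-derivation. $R=D[t;\sigma,\delta]$ is the skew polynomial ring with $ta=\sigma(a)t+\delta(a)$. For monic $f$ of degree $m$, $S_f$ is the set of polynomials of degree $<m$ with multiplication $g\circ h=$ remainder of $gh$ upon right division by $f$. $\mathrm{Nuc}_r(A)=\{x\in A:(yz)x=y(zx)\ \forall y,z\in A\}$. $f$ is right $B$-weak invariant if $fB\subseteq Df$ and $f(t)t=(bt+a)f(t)$ for some $a,b\in B$. *)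

theory Defs
  imports "HOL-Computational_Algebra.Polynomial"
begin

text \<open>Skew polynomials D[t;sigma,delta] are represented by their (left) coefficient
  sequences: the polynomial p stands for sum_i (coeff p i) t^i, coefficients on the left.\<close>

definition is_ring_endo :: "('a::division_ring \<Rightarrow> 'a) \<Rightarrow> bool" where
  "is_ring_endo \<sigma> \<longleftrightarrow> (\<forall>a b. \<sigma> (a + b) = \<sigma> a + \<sigma> b) \<and>
     (\<forall>a b. \<sigma> (a * b) = \<sigma> a * \<sigma> b) \<and> \<sigma> 1 = 1"

definition is_left_sigma_derivation ::
  "('a::division_ring \<Rightarrow> 'a) \<Rightarrow> ('a \<Rightarrow> 'a) \<Rightarrow> bool" where
  "is_left_sigma_derivation \<sigma> \<delta> \<longleftrightarrow> (\<forall>a b. \<delta> (a + b) = \<delta> a + \<delta> b) \<and>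
     (\<forall>a b. \<delta> (a * b) = \<sigma> a * \<delta> b + \<delta> a * b)"

text \<open>Left multiplication by t:  t (sum a_i t^i) = sum (sigma(a_i) t^(i+1) + delta(a_i) t^i).\<close>
definition skew_tmul :: "('a::division_ring \<Rightarrow> 'a) \<Rightarrow> ('a \<Rightarrow> 'a) \<Rightarrow> 'a poly \<Rightarrow> 'a poly" where
  "skew_tmul \<sigma> \<delta> p = pCons 0 (map_poly \<sigma> p) + map_poly \<delta> p"

definition skew_lsmult :: "'a::division_ring \<Rightarrow> 'a poly \<Rightarrow> 'a poly" where
  "skew_lsmult a p = map_poly (\<lambda>x. a * x) p"

definition skew_mult :: "('a::division_ring \<Rightarrow> 'a) \<Rightarrow> ('a \<Rightarrow> 'a) \<Rightarrow> 'a poly \<Rightarrow> 'a poly \<Rightarrow> 'a poly" where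
  "skew_mult \<sigma> \<delta> p q = (\<Sum>i\<le>degree p. skew_lsmult (coeff p i) ((skew_tmul \<sigma> \<delta> ^^ i) q))"

definition skew_rmod :: "('a::division_ring \<Rightarrow> 'a) \<Rightarrow> ('a \<Rightarrow> 'a) \<Rightarrow> 'a poly \<Rightarrow> 'a poly \<Rightarrow> 'a poly" where
  "skew_rmod \<sigma> \<delta> g f = (THE r. degree r < degree f \<and> (\<exists>q. g = skew_mult \<sigma> \<delta> q f + r))"

definition Sf_carrier :: "'a::division_ring poly \<Rightarrow> 'a poly set" where
  "Sf_carrier f = {g. degree g < degree f}"

definition Sf_mult :: "('a::division_ring \<Rightarrow> 'a) \<Rightarrow> ('a \<Rightarrow> 'a) \<Rightarrow> 'a poly \<Rightarrow> 'a poly \<Rightarrow> 'a poly \<Rightarrow> 'a poly" where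
  "Sf_mult \<sigma> \<delta> f g h = skew_rmod \<sigma> \<delta> (skew_mult \<sigma> \<delta> g h) f"

definition Sf_right_nucleus :: "('a::division_ring \<Rightarrow> 'a) \<Rightarrow> ('a \<Rightarrow> 'a) \<Rightarrow> 'a poly \<Rightarrow> 'a poly set" where
  "Sf_right_nucleus \<sigma> \<delta> f = {x \<in> Sf_carrier f. \<forall>y\<in>Sf_carrier f. \<forall>z\<in>Sf_carrier f.
      Sf_mult \<sigma> \<delta> f (Sf_mult \<sigma> \<delta> f y z) x = Sf_mult \<sigma> \<delta> f y (Sf_mult \<sigma> \<delta> f z x)}"

definition is_subring :: "'a::division_ring set \<Rightarrow> bool" where
  "is_subring B \<longleftrightarrow> 0 \<in> B \<and> 1 \<in> B \<and> (\<forall>x\<in>B. \<forall>y\<in>B. x + y \<in> B \<and> x - y \<in> B \<and> x * y \<in> B)"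

definition right_weak_invariant ::
  "('a::division_ring \<Rightarrow> 'a) \<Rightarrow> ('a \<Rightarrow> 'a) \<Rightarrow> 'a set \<Rightarrow> 'a poly \<Rightarrow> bool" where
  "right_weak_invariant \<sigma> \<delta> B f \<longleftrightarrow>
     (\<forall>c\<in>B. \<exists>d. skew_mult \<sigma> \<delta> f [:c:] = skew_mult \<sigma> \<delta> [:d:] f) \<and>
     (\<exists>a\<in>B. \<exists>b\<in>B. skew_mult \<sigma> \<delta> f [:0, 1:] = skew_mult \<sigma> \<delta> [:a, b:] f)"

end

theory Submission
  imports Defs
begin

text \<open>
  Every x of degree < deg f in the idealizer {x. f x \<in> Rf} lies in the right nucleus of S_f:
  reduction modulo f commutes with left multiplication by anything (Rf is a left ideal) and with
  right multiplication by x (since Rf x \<subseteq> Rf), so both bracketings of y z x in S_f are the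
  remainder of the associative product (y z) x = y (z x) in R. The idealizer is closed under
  sums and products, and weak invariance puts the constants from B and t into it, hence every
  polynomial with coefficients in B.
\<close>

lemma coeff_skew_lsmult: "coeff (skew_lsmult a p) n = a * coeff p n"
  by (simp add: skew_lsmult_def coeff_map_poly)

lemma skew_lsmult_add: "skew_lsmult a (p + q) = skew_lsmult a p + skew_lsmult a q"
  by (simp add: poly_eq_iff coeff_skew_lsmult algebra_simps)

lemma skew_lsmult_add_left: "skew_lsmult (a + b) p = skew_lsmult a p + skew_lsmult b p"
  by (simp add: poly_eq_iff coeff_skew_lsmult algebra_simps)

lemma skew_lsmult_0 [simp]: "skew_lsmult a 0 = 0"
  by (simp add: poly_eq_iff coeff_skew_lsmult)

lemma skew_lsmult_0_left [simp]: "skew_lsmult 0 p = 0"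
  by (simp add: poly_eq_iff coeff_skew_lsmult)

lemma skew_lsmult_1 [simp]: "skew_lsmult 1 p = p"
  by (simp add: poly_eq_iff coeff_skew_lsmult)

lemma skew_lskew_times_lsmult: "skew_lsmult a (skew_lsmult b p) = skew_lsmult (a * b) p"
  by (simp add: poly_eq_iff coeff_skew_lsmult mult.assoc)

lemma skew_lsmult_sum: "skew_lsmult a (sum g A) = (\<Sum>i\<in>A. skew_lsmult a (g i))"
  by (induction A rule: infinite_finite_induct) (simp_all add: skew_lsmult_add)

lemma skew_lsmult_monom: "skew_lsmult a (monom b i) = monom (a * b) i"
  by (simp add: poly_eq_iff coeff_skew_lsmult coeff_monom)

lemma degree_skew_lsmult_le: "degree (skew_lsmult a p) \<le> degree p"
  by (rule degree_le) (simp add: coeff_skew_lsmult coeff_eq_0)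

definition skew_idealizer ::
  "('a::division_ring \<Rightarrow> 'a) \<Rightarrow> ('a \<Rightarrow> 'a) \<Rightarrow> 'a poly \<Rightarrow> 'a poly set" where
  "skew_idealizer \<sigma> \<delta> f = {x. \<exists>h. skew_mult \<sigma> \<delta> f x = skew_mult \<sigma> \<delta> h f}"

locale skew_polynomial_ring =
  fixes \<sigma> \<delta> :: "'a::division_ring \<Rightarrow> 'a"
  assumes endo: "is_ring_endo \<sigma>" and deriv: "is_left_sigma_derivation \<sigma> \<delta>"
begin

abbreviation T :: "'a poly \<Rightarrow> 'a poly" where "T \<equiv> skew_tmul \<sigma> \<delta>"
abbreviation skew_times :: "'a poly \<Rightarrow> 'a poly \<Rightarrow> 'a poly" (infixl "\<odot>" 70)
  where "p \<odot> q \<equiv> skew_mult \<sigma> \<delta> p q"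

lemma endo_add: "\<sigma> (a + b) = \<sigma> a + \<sigma> b"
  and endo_mult: "\<sigma> (a * b) = \<sigma> a * \<sigma> b"
  and endo_1: "\<sigma> 1 = 1"
  using endo by (simp_all add: is_ring_endo_def)

lemma deriv_add: "\<delta> (a + b) = \<delta> a + \<delta> b"
  and deriv_mult: "\<delta> (a * b) = \<sigma> a * \<delta> b + \<delta> a * b"
  using deriv by (simp_all add: is_left_sigma_derivation_def)

lemma endo_0: "\<sigma> 0 = 0"
  using endo_add[of 0 0] by simp

lemma deriv_0: "\<delta> 0 = 0"
  using deriv_add[of 0 0] by simp

lemma deriv_1: "\<delta> 1 = 0"
  using deriv_mult[of 1 1] by (simp add: endo_1)

lemma coeff_skew_tmul:
  "coeff (T p) n = (case n of 0 \<Rightarrow> 0 | Suc k \<Rightarrow> \<sigma> (coeff p k)) + \<delta> (coeff p n)"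
  by (simp add: skew_tmul_def coeff_map_poly endo_0 deriv_0 coeff_pCons split: nat.split)

lemma skew_tmul_add: "T (p + q) = T p + T q"
  by (simp add: poly_eq_iff coeff_skew_tmul endo_add deriv_add algebra_simps split: nat.split)

lemma skew_tmul_0: "T 0 = 0"
  by (simp add: poly_eq_iff coeff_skew_tmul endo_0 deriv_0 split: nat.split)

lemma skew_tmul_sum: "T (sum g A) = (\<Sum>i\<in>A. T (g i))"
  by (induction A rule: infinite_finite_induct) (simp_all add: skew_tmul_0 skew_tmul_add)

lemma skew_tmul_pow_add: "(T ^^ i) (p + q) = (T ^^ i) p + (T ^^ i) q"
  by (induction i) (simp_all add: skew_tmul_add)

lemma skew_tmul_pow_0: "(T ^^ i) 0 = 0"
  by (induction i) (simp_all add: skew_tmul_0)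

lemma skew_tmul_lsmult: "T (skew_lsmult a p) = skew_lsmult (\<sigma> a) (T p) + skew_lsmult (\<delta> a) p"
  by (simp add: poly_eq_iff coeff_skew_tmul coeff_skew_lsmult endo_mult deriv_mult
      algebra_simps split: nat.split)

lemma skew_tmul_monom: "T (monom b i) = monom (\<sigma> b) (Suc i) + monom (\<delta> b) i"
  by (simp add: poly_eq_iff coeff_skew_tmul coeff_monom endo_0 deriv_0 split: nat.split)

lemma skew_tmul_pow_monom_1: "(T ^^ i) (monom 1 k) = monom 1 (k + i)"
  by (induction i) (simp_all add: skew_tmul_monom endo_1 deriv_1)

lemma degree_skew_tmul_le: "degree (T p) \<le> Suc (degree p)"
  by (rule degree_le) (auto simp: coeff_skew_tmul coeff_eq_0 endo_0 deriv_0 split: nat.split)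

lemma coeff_skew_tmul_Suc_degree: "coeff (T p) (Suc (degree p)) = \<sigma> (lead_coeff p)"
  by (simp add: coeff_skew_tmul coeff_eq_0 deriv_0)

lemma skew_tmul_pow_monic:
  assumes "lead_coeff f = 1"
  shows "degree ((T ^^ i) f) = degree f + i \<and> lead_coeff ((T ^^ i) f) = 1"
proof (induction i)
  case 0
  then show ?case using assms by simp
next
  case (Suc i)
  let ?p = "(T ^^ i) f"
  have "lead_coeff ?p = 1" using Suc.IH by blast
  then have top: "coeff (T ?p) (Suc (degree ?p)) = 1"
    by (simp only: coeff_skew_tmul_Suc_degree endo_1)
  then have "degree (T ?p) = Suc (degree ?p)"
    using degree_skew_tmul_le[of ?p] le_degree[of "T ?p"] by (metis le_antisym zero_neq_one)
  then show ?case using Suc.IH top by simp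
qed

subsection \<open>The ring structure of D[t;\<sigma>,\<delta>]\<close>

lemma skew_mult_conv_sum:
  "degree p \<le> N \<Longrightarrow> p \<odot> q = (\<Sum>i\<le>N. skew_lsmult (coeff p i) ((T ^^ i) q))"
  unfolding skew_mult_def by (rule sum.mono_neutral_left) (auto simp: coeff_eq_0)

lemma coeff_skew_mult: "coeff (p \<odot> q) n = (\<Sum>i\<le>degree p. coeff p i * coeff ((T ^^ i) q) n)"
  by (simp add: skew_mult_def coeff_sum coeff_skew_lsmult)

lemma skew_mult_add_left: "(p1 + p2) \<odot> q = p1 \<odot> q + p2 \<odot> q"
proof -
  let ?N = "max (degree p1) (degree p2)"
  have "degree (p1 + p2) \<le> ?N" by (rule degree_add_le_max)
  then show ?thesis
    by (simp add: skew_mult_conv_sum[of _ ?N] skew_lsmult_add_left sum.distrib)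
qed

lemma skew_mult_0_left: "0 \<odot> q = 0"
  by (simp add: skew_mult_def)

lemma skew_mult_diff_left: "(p1 - p2) \<odot> q = p1 \<odot> q - p2 \<odot> q"
  using skew_mult_add_left[of "p1 - p2" p2 q] by (simp add: eq_diff_eq)

lemma skew_mult_sum_left: "sum g A \<odot> q = (\<Sum>i\<in>A. g i \<odot> q)"
  by (induction A rule: infinite_finite_induct) (simp_all add: skew_mult_0_left skew_mult_add_left)

lemma skew_mult_add_right: "p \<odot> (q1 + q2) = p \<odot> q1 + p \<odot> q2"
  by (simp add: skew_mult_def skew_tmul_pow_add skew_lsmult_add sum.distrib)

lemma skew_mult_0_right: "p \<odot> 0 = 0"
  by (simp add: skew_mult_def skew_tmul_pow_0)

lemma monom_skew_mult: "monom a i \<odot> q = skew_lsmult a ((T ^^ i) q)"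
proof -
  have "monom a i \<odot> q = (\<Sum>j\<le>i. skew_lsmult (coeff (monom a i) j) ((T ^^ j) q))"
    by (rule skew_mult_conv_sum) (rule degree_monom_le)
  also have "\<dots> = (\<Sum>j\<le>i. if j = i then skew_lsmult a ((T ^^ i) q) else 0)"
    by (rule sum.cong) (auto simp: coeff_monom)
  finally show ?thesis by simp
qed

lemma const_skew_mult: "[:c:] \<odot> q = skew_lsmult c q"
  using monom_skew_mult[of c 0 q] by (simp add: monom_0)

lemma skew_mult_const_1_right: "p \<odot> [:1:] = p"
proof -
  have "p \<odot> [:1:] = (\<Sum>i\<le>degree p. monom (coeff p i) i)"
    unfolding skew_mult_def
    using skew_tmul_pow_monom_1[of _ 0] by (simp add: monom_0 skew_lsmult_monom)
  then show ?thesis by (simp add: poly_as_sum_of_monoms)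
qed

lemma skew_mult_lsmult_left: "skew_lsmult a q \<odot> r = skew_lsmult a (q \<odot> r)"
proof -
  have "skew_lsmult a q \<odot> r
      = (\<Sum>i\<le>degree q. skew_lsmult (coeff (skew_lsmult a q) i) ((T ^^ i) r))"
    by (rule skew_mult_conv_sum) (rule degree_skew_lsmult_le)
  then show ?thesis
    by (simp add: skew_mult_def coeff_skew_lsmult skew_lskew_times_lsmult skew_lsmult_sum)
qed

lemma skew_mult_tmul_left: "T q \<odot> r = T (q \<odot> r)"
proof -
  have "T q = (\<Sum>i\<le>degree q. monom (\<sigma> (coeff q i)) (Suc i) + monom (\<delta> (coeff q i)) i)"
    by (subst (1) poly_as_sum_of_monoms[symmetric]) (simp add: skew_tmul_sum skew_tmul_monom)
  then have "T q \<odot> r = (\<Sum>i\<le>degree q. skew_lsmult (\<sigma> (coeff q i)) (T ((T ^^ i) r))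
                                   + skew_lsmult (\<delta> (coeff q i)) ((T ^^ i) r))"
    by (simp add: skew_mult_sum_left skew_mult_add_left monom_skew_mult)
  also have "\<dots> = T (q \<odot> r)"
    by (simp add: skew_mult_def skew_tmul_sum skew_tmul_lsmult)
  finally show ?thesis .
qed

lemma skew_mult_tmul_pow_left: "(T ^^ i) q \<odot> r = (T ^^ i) (q \<odot> r)"
  by (induction i) (simp_all add: skew_mult_tmul_left)

lemma skew_mult_assoc: "(p \<odot> q) \<odot> r = p \<odot> (q \<odot> r)"
proof -
  have "(p \<odot> q) \<odot> r = (\<Sum>i\<le>degree p. skew_lsmult (coeff p i) ((T ^^ i) q)) \<odot> r"
    by (simp only: skew_mult_def[of \<sigma> \<delta> p q])
  also have "\<dots> = (\<Sum>i\<le>degree p. skew_lsmult (coeff p i) ((T ^^ i) (q \<odot> r)))"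
    by (simp add: skew_mult_sum_left skew_mult_lsmult_left skew_mult_tmul_pow_left)
  also have "\<dots> = p \<odot> (q \<odot> r)"
    by (simp only: skew_mult_def[of \<sigma> \<delta> p])
  finally show ?thesis .
qed

subsection \<open>Right division by a monic polynomial\<close>

lemma skew_mult_monic:
  assumes "lead_coeff f = 1" "q \<noteq> 0"
  shows "degree (q \<odot> f) = degree q + degree f \<and> lead_coeff (q \<odot> f) = lead_coeff q"
proof -
  let ?n = "degree q + degree f"
  have small: "degree ((T ^^ i) f) < ?n" if "i < degree q" for i
    using skew_tmul_pow_monic[OF assms(1), of i] that by simp
  have "coeff (q \<odot> f) k = 0" if "k > ?n" for k
    unfolding coeff_skew_mult
    using skew_tmul_pow_monic[OF assms(1)] that by (intro sum.neutral) (simp add: coeff_eq_0)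
  then have "degree (q \<odot> f) \<le> ?n" by (simp add: degree_le)
  have "coeff ((T ^^ degree q) f) ?n = 1"
    using skew_tmul_pow_monic[OF assms(1), of "degree q"] by (metis add.commute)
  then have top: "coeff (q \<odot> f) ?n = lead_coeff q"
    unfolding coeff_skew_mult using small
    by (simp add: lessThan_Suc_atMost[symmetric] coeff_eq_0)
  with \<open>degree (q \<odot> f) \<le> ?n\<close> have "degree (q \<odot> f) = ?n"
    using le_degree[of "q \<odot> f" ?n] assms(2) by simp
  then show ?thesis using top by simp
qed

lemma skew_div_exists:
  assumes "lead_coeff f = 1" "degree f > 0"
  shows "\<exists>q r. g = q \<odot> f + r \<and> degree r < degree f"
proof (induction "degree g" arbitrary: g rule: less_induct)
  case less
  show ?case
  proof (cases "degree g < degree f")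
    case True
    then show ?thesis by (intro exI[of _ 0] exI[of _ g]) (simp add: skew_mult_0_left)
  next
    case False
    define m where "m = monom (lead_coeff g) (degree g - degree f)"
    have "g \<noteq> 0" using False assms(2) by auto
    then have "m \<noteq> 0" "degree m = degree g - degree f"
      by (simp_all add: m_def degree_monom_eq)
    have mf_degree: "degree (m \<odot> f) = degree g"
      using skew_mult_monic[OF assms(1) \<open>m \<noteq> 0\<close>] \<open>degree m = _\<close> False by simp
    have "lead_coeff m = lead_coeff g" using \<open>degree m = _\<close> by (simp add: m_def)
    then have "lead_coeff (m \<odot> f) = lead_coeff g"
      using skew_mult_monic[OF assms(1) \<open>m \<noteq> 0\<close>] by metis
    with mf_degree have mf_top: "coeff (m \<odot> f) (degree g) = lead_coeff g" by simp
    have "degree (g - m \<odot> f) < degree g"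
      using False assms(2) mf_degree mf_top degree_diff_le[of g "degree g" "m \<odot> f"]
      by (intro degree_lessI) (auto simp: coeff_eq_0 le_less)
    then obtain q r where "g - m \<odot> f = q \<odot> f + r" "degree r < degree f"
      using less by blast
    then have "g = (q + m) \<odot> f + r \<and> degree r < degree f"
      by (simp add: skew_mult_add_left algebra_simps)
    then show ?thesis by blast
  qed
qed

lemma skew_div_unique:
  assumes "lead_coeff f = 1" "q1 \<odot> f + r1 = q2 \<odot> f + r2"
    and "degree r1 < degree f" "degree r2 < degree f"
  shows "r1 = r2"
proof (rule ccontr)
  assume "r1 \<noteq> r2"
  then have "q1 \<noteq> q2" using assms(2) by auto
  have "(q1 - q2) \<odot> f = r2 - r1"
    using assms(2) by (simp add: skew_mult_diff_left algebra_simps)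
  moreover have "degree ((q1 - q2) \<odot> f) \<ge> degree f"
    using skew_mult_monic[OF assms(1), of "q1 - q2"] \<open>q1 \<noteq> q2\<close> by simp
  moreover have "degree (r2 - r1) < degree f"
    using assms(4,3) by (rule degree_diff_less)
  ultimately show False by simp
qed

lemma skew_rmod_eqI:
  assumes "lead_coeff f = 1" "g = q \<odot> f + r" "degree r < degree f"
  shows "skew_rmod \<sigma> \<delta> g f = r"
  unfolding skew_rmod_def
proof (rule the_equality)
  show "degree r < degree f \<and> (\<exists>q. g = q \<odot> f + r)" using assms by blast
next
  fix r' assume "degree r' < degree f \<and> (\<exists>q. g = q \<odot> f + r')"
  then show "r' = r" using skew_div_unique[OF assms(1)] assms(2,3) by metis
qed

lemma skew_rmod_decomp:
  assumes "lead_coeff f = 1" "degree f > 0"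
  obtains q where "g = q \<odot> f + skew_rmod \<sigma> \<delta> g f" "degree (skew_rmod \<sigma> \<delta> g f) < degree f"
  using skew_div_exists[OF assms, of g] skew_rmod_eqI[OF assms(1)] by metis

lemma skew_rmod_add_mult:
  assumes "lead_coeff f = 1" "degree f > 0"
  shows "skew_rmod \<sigma> \<delta> (q \<odot> f + g) f = skew_rmod \<sigma> \<delta> g f"
proof -
  obtain p where "g = p \<odot> f + skew_rmod \<sigma> \<delta> g f" "degree (skew_rmod \<sigma> \<delta> g f) < degree f"
    using skew_rmod_decomp[OF assms] .
  then show ?thesis
    by (intro skew_rmod_eqI[OF assms(1), of _ "q + p"]) (simp_all add: skew_mult_add_left add.assoc)
qed

lemma skew_rmod_mult_left:
  assumes "lead_coeff f = 1" "degree f > 0"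
  shows "skew_rmod \<sigma> \<delta> (y \<odot> g) f = skew_rmod \<sigma> \<delta> (y \<odot> skew_rmod \<sigma> \<delta> g f) f"
proof -
  obtain q where "g = q \<odot> f + skew_rmod \<sigma> \<delta> g f"
    using skew_rmod_decomp[OF assms] .
  then have "y \<odot> g = (y \<odot> q) \<odot> f + y \<odot> skew_rmod \<sigma> \<delta> g f"
    by (metis skew_mult_add_right skew_mult_assoc)
  then show ?thesis by (simp add: skew_rmod_add_mult[OF assms])
qed

subsection \<open>The idealizer of f and the right nucleus of S_f\<close>

lemma skew_rmod_mult_idealizer:
  assumes "lead_coeff f = 1" "degree f > 0" "x \<in> skew_idealizer \<sigma> \<delta> f"
  shows "skew_rmod \<sigma> \<delta> (g \<odot> x) f = skew_rmod \<sigma> \<delta> (skew_rmod \<sigma> \<delta> g f \<odot> x) f"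
proof -
  obtain h where h: "f \<odot> x = h \<odot> f"
    using assms(3) by (auto simp: skew_idealizer_def)
  obtain q where "g = q \<odot> f + skew_rmod \<sigma> \<delta> g f"
    using skew_rmod_decomp[OF assms(1,2)] .
  then have "g \<odot> x = (q \<odot> h) \<odot> f + skew_rmod \<sigma> \<delta> g f \<odot> x"
    by (metis h skew_mult_add_left skew_mult_assoc)
  then show ?thesis by (simp add: skew_rmod_add_mult[OF assms(1,2)])
qed

lemma skew_idealizer_subset_right_nucleus:
  assumes "lead_coeff f = 1" "degree f > 0"
  shows "{x \<in> skew_idealizer \<sigma> \<delta> f. degree x < degree f} \<subseteq> Sf_right_nucleus \<sigma> \<delta> f"
proof safe
  fix x assume x: "x \<in> skew_idealizer \<sigma> \<delta> f" "degree x < degree f"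
  let ?rmod = "\<lambda>g. skew_rmod \<sigma> \<delta> g f"
  have "?rmod (?rmod (y \<odot> z) \<odot> x) = ?rmod (y \<odot> ?rmod (z \<odot> x))" for y z
  proof -
    have "?rmod (?rmod (y \<odot> z) \<odot> x) = ?rmod ((y \<odot> z) \<odot> x)"
      using skew_rmod_mult_idealizer[OF assms x(1)] by simp
    also have "\<dots> = ?rmod (y \<odot> (z \<odot> x))"
      by (simp only: skew_mult_assoc)
    also have "\<dots> = ?rmod (y \<odot> ?rmod (z \<odot> x))"
      using skew_rmod_mult_left[OF assms] by simp
    finally show ?thesis .
  qed
  then show "x \<in> Sf_right_nucleus \<sigma> \<delta> f"
    using x(2) by (simp add: Sf_right_nucleus_def Sf_carrier_def Sf_mult_def)
qed

lemma skew_idealizer_0: "0 \<in> skew_idealizer \<sigma> \<delta> f"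
proof -
  have "f \<odot> 0 = 0 \<odot> f" by (simp add: skew_mult_0_left skew_mult_0_right)
  then show ?thesis by (auto simp: skew_idealizer_def)
qed

lemma skew_idealizer_const_1: "[:1:] \<in> skew_idealizer \<sigma> \<delta> f"
proof -
  have "f \<odot> [:1:] = [:1:] \<odot> f" by (simp add: skew_mult_const_1_right const_skew_mult)
  then show ?thesis by (auto simp: skew_idealizer_def)
qed

lemma skew_idealizer_add:
  assumes "x \<in> skew_idealizer \<sigma> \<delta> f" "y \<in> skew_idealizer \<sigma> \<delta> f"
  shows "x + y \<in> skew_idealizer \<sigma> \<delta> f"
proof -
  obtain h k where "f \<odot> x = h \<odot> f" "f \<odot> y = k \<odot> f"
    using assms by (auto simp: skew_idealizer_def)
  then have "f \<odot> (x + y) = (h + k) \<odot> f"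
    by (simp add: skew_mult_add_left skew_mult_add_right)
  then show ?thesis by (auto simp: skew_idealizer_def)
qed

lemma skew_idealizer_mult:
  assumes "x \<in> skew_idealizer \<sigma> \<delta> f" "y \<in> skew_idealizer \<sigma> \<delta> f"
  shows "x \<odot> y \<in> skew_idealizer \<sigma> \<delta> f"
proof -
  obtain h k where h: "f \<odot> x = h \<odot> f" and k: "f \<odot> y = k \<odot> f"
    using assms by (auto simp: skew_idealizer_def)
  have "f \<odot> (x \<odot> y) = h \<odot> (f \<odot> y)"
    by (simp only: skew_mult_assoc[symmetric] h)
  also have "\<dots> = (h \<odot> k) \<odot> f"
    by (simp only: k skew_mult_assoc)
  finally have "f \<odot> (x \<odot> y) = (h \<odot> k) \<odot> f" .
  then show ?thesis by (auto simp: skew_idealizer_def)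
qed

lemma skew_idealizer_sum:
  "(\<And>i. i \<in> A \<Longrightarrow> g i \<in> skew_idealizer \<sigma> \<delta> f) \<Longrightarrow> sum g A \<in> skew_idealizer \<sigma> \<delta> f"
  by (induction A rule: infinite_finite_induct) (simp_all add: skew_idealizer_0 skew_idealizer_add)

lemma poly_in_skew_idealizer:
  assumes "\<And>i. [:coeff x i:] \<in> skew_idealizer \<sigma> \<delta> f" "[:0, 1:] \<in> skew_idealizer \<sigma> \<delta> f"
  shows "x \<in> skew_idealizer \<sigma> \<delta> f"
proof -
  have "monom 1 (Suc i) = monom 1 i \<odot> [:0, 1:]" for i
    using skew_tmul_pow_monom_1[of i 1] by (simp add: monom_skew_mult monom_Suc monom_0)
  then have t_pow: "monom 1 i \<in> skew_idealizer \<sigma> \<delta> f" for i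
    by (induction i) (simp_all add: monom_0 skew_idealizer_const_1 skew_idealizer_mult assms(2))
  have "monom (coeff x i) i = [:coeff x i:] \<odot> monom 1 i" for i
    by (simp add: const_skew_mult skew_lsmult_monom)
  then have "monom (coeff x i) i \<in> skew_idealizer \<sigma> \<delta> f" for i
    by (simp add: skew_idealizer_mult assms(1) t_pow)
  then have "(\<Sum>i\<le>degree x. monom (coeff x i) i) \<in> skew_idealizer \<sigma> \<delta> f"
    by (rule skew_idealizer_sum)
  then show ?thesis by (simp add: poly_as_sum_of_monoms)
qed

end

lemma right_weak_invariant_imp_skew_idealizer:
  assumes "right_weak_invariant \<sigma> \<delta> B f"
  shows "\<And>c. c \<in> B \<Longrightarrow> [:c:] \<in> skew_idealizer \<sigma> \<delta> f"
    and "[:0, 1:] \<in> skew_idealizer \<sigma> \<delta> f"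
  using assms unfolding right_weak_invariant_def skew_idealizer_def by blast+

theorem mainTheorem4:
  fixes \<sigma> \<delta> :: "'a::division_ring \<Rightarrow> 'a" and B :: "'a set" and f :: "'a poly"
  assumes "is_ring_endo \<sigma>"
    and "is_left_sigma_derivation \<sigma> \<delta>"
    and "is_subring B"
    and "lead_coeff f = 1"
    and "degree f \<ge> 2"
    and "right_weak_invariant \<sigma> \<delta> B f"
  shows "{p. degree p < degree f \<and> (\<forall>i. coeff p i \<in> B)} \<subseteq> Sf_right_nucleus \<sigma> \<delta> f"
proof -
  interpret skew_polynomial_ring \<sigma> \<delta>
    using assms(1,2) by unfold_locales
  have "{p. degree p < degree f \<and> (\<forall>i. coeff p i \<in> B)}
      \<subseteq> {x \<in> skew_idealizer \<sigma> \<delta> f. degree x < degree f}"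
    using poly_in_skew_idealizer right_weak_invariant_imp_skew_idealizer[OF assms(6)] by auto
  also have "\<dots> \<subseteq> Sf_right_nucleus \<sigma> \<delta> f"
    using skew_idealizer_subset_right_nucleus assms(4,5) by simp
  finally show ?thesis .
qed

end
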